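(* For any finite simple graphs $H_1$ and $H_2$, $$\rho_R(H_1+H_2)=\rho_R(H_1)+\rho_R(H_2),$$ where $H_1+H_2$ denotes the join of $H_1$ and $H_2$.
   Context: The join $H_1+H_2$ is the graph obtained from the disjoint union of $H_1$ and $H_2$ by adding all edges between $V(H_1)$ and $V(H_2)$. If $V(H)=\{h_1,\ldots,h_n\}$, a replication graph of $H$ is a graph $G$ obtained by replacing each vertex $h_i$ by a clique $K_i$ with $|K_i|\ge1$ (cliques pairwise vertex-disjoint), where two vertices in different cliques $K_i,K_j$ are adjacent iff $h_ih_j\in E(H)$. $\rho_R(H)$ is the minimum order of a replication graph $G$ of $H$ such that every proper vertex coloring of $G$ admits a choice of exactly one vertex from each clique $K_i$ with all chosen vertices of pairwise different colors. *)

theory Defs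
  imports Main
begin

text \<open>A finite simple graph is given by a finite vertex set V and a symmetric,
irreflexive adjacency relation E (only its restriction to V matters).\<close>

definition simple_graph :: "'a set \<Rightarrow> ('a \<Rightarrow> 'a \<Rightarrow> bool) \<Rightarrow> bool" where
  "simple_graph V E \<longleftrightarrow> finite V \<and> (\<forall>x\<in>V. \<forall>y\<in>V. E x y \<longrightarrow> E y x) \<and> (\<forall>x\<in>V. \<not> E x x)"

definition join_V :: "'a set \<Rightarrow> 'b set \<Rightarrow> ('a + 'b) set" where
  "join_V V1 V2 = Inl ` V1 \<union> Inr ` V2"

fun join_E :: "('a \<Rightarrow> 'a \<Rightarrow> bool) \<Rightarrow> ('b \<Rightarrow> 'b \<Rightarrow> bool) \<Rightarrow> ('a + 'b) \<Rightarrow> ('a + 'b) \<Rightarrow> bool" where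
  "join_E E1 E2 (Inl x) (Inl y) = E1 x y"
| "join_E E1 E2 (Inr x) (Inr y) = E2 x y"
| "join_E E1 E2 (Inl x) (Inr y) = True"
| "join_E E1 E2 (Inr x) (Inl y) = True"

text \<open>Replication graph of (V,E) with clique sizes m h (m h \<ge> 1): vertex h is replaced
by the clique {(h,i) | i < m h}.\<close>

definition rep_V :: "'a set \<Rightarrow> ('a \<Rightarrow> nat) \<Rightarrow> ('a \<times> nat) set" where
  "rep_V V m = {(h, i). h \<in> V \<and> i < m h}"

definition rep_E :: "('a \<Rightarrow> 'a \<Rightarrow> bool) \<Rightarrow> ('a \<times> nat) \<Rightarrow> ('a \<times> nat) \<Rightarrow> bool" where
  "rep_E E u v \<longleftrightarrow> (fst u = fst v \<and> snd u \<noteq> snd v) \<or> (fst u \<noteq> fst v \<and> E (fst u) (fst v))"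

text \<open>Proper vertex colouring of a graph (colours are natural numbers; for finite
graphs this loses no generality).\<close>

definition proper_coloring :: "'v set \<Rightarrow> ('v \<Rightarrow> 'v \<Rightarrow> bool) \<Rightarrow> ('v \<Rightarrow> nat) \<Rightarrow> bool" where
  "proper_coloring W F c \<longleftrightarrow> (\<forall>u\<in>W. \<forall>v\<in>W. F u v \<longrightarrow> c u \<noteq> c v)"

definition good_replication :: "'a set \<Rightarrow> ('a \<Rightarrow> 'a \<Rightarrow> bool) \<Rightarrow> ('a \<Rightarrow> nat) \<Rightarrow> bool" where
  "good_replication V E m \<longleftrightarrow>
     (\<forall>h\<in>V. 1 \<le> m h) \<and>
     (\<forall>c. proper_coloring (rep_V V m) (rep_E E) c \<longrightarrow>
        (\<exists>f. (\<forall>h\<in>V. f h < m h) \<and> inj_on (\<lambda>h. c (h, f h)) V))"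

definition rho_R :: "'a set \<Rightarrow> ('a \<Rightarrow> 'a \<Rightarrow> bool) \<Rightarrow> nat" where
  "rho_R V E = (LEAST n. \<exists>m. good_replication V E m \<and> n = (\<Sum>h\<in>V. m h))"

end

theory Submission
  imports Defs
begin

text \<open>
  A replication is good on the join exactly when it is good on both sides. Given good
  replications of \<open>H\<^sub>1\<close> and \<open>H\<^sub>2\<close>, a proper colouring of the joined replication restricts to
  proper colourings of both parts, and the two rainbow choices combine, because every clique
  of one side is completely joined to every clique of the other, so their colours never
  collide. Conversely, goodness passes to every induced subgraph: a proper colouring of the
  replicated subgraph extends to the whole replication by giving all other vertices pairwise
  distinct fresh colours. Since good replications exist (cliques of size \<open>|V(H)|\<close> allow a greedy
  rainbow choice), \<open>\<rho>\<^sub>R\<close> is attained, and both inequalities follow.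
\<close>

lemma rep_V_iff [simp]: "(h, i) \<in> rep_V V m \<longleftrightarrow> h \<in> V \<and> i < m h"
  by (simp add: rep_V_def)

lemma finite_rep_V:
  assumes "finite V"
  shows "finite (rep_V V m)"
proof -
  have "rep_V V m = Sigma V (\<lambda>h. {..<m h})" by (auto simp: rep_V_def)
  then show ?thesis using assms by simp
qed

lemma join_V_eq_Plus: "join_V V1 V2 = V1 <+> V2"
  by (simp add: join_V_def Plus_def)

lemma exists_inj_on_choice:
  assumes "finite W" and "\<And>x. x \<in> W \<Longrightarrow> card W \<le> card (A x)"
  shows "\<exists>f. (\<forall>x\<in>W. f x \<in> A x) \<and> inj_on f W"
  using assms
proof (induction W rule: finite_induct)
  case empty
  show ?case by auto
next
  case (insert x F)
  then obtain f where f: "\<forall>y\<in>F. f y \<in> A y" "inj_on f F"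
    by fastforce
  have "card (f ` F) < card (A x)"
    using card_image_le[OF \<open>finite F\<close>, of f] insert.prems[of x] insert.hyps by simp
  then have "\<not> A x \<subseteq> f ` F"
    using card_mono[OF finite_imageI[OF \<open>finite F\<close>]] by fastforce
  then obtain a where "a \<in> A x" "a \<notin> f ` F" by blast
  then have "(\<forall>y\<in>insert x F. (f(x := a)) y \<in> A y) \<and> inj_on (f(x := a)) (insert x F)"
    using f \<open>x \<notin> F\<close> by (auto simp: inj_on_def)
  then show ?case by blast
qed

lemma proper_coloring_inj_on_clique:
  assumes "proper_coloring (rep_V V m) (rep_E E) c" and "h \<in> V"
  shows "inj_on (\<lambda>i. c (h, i)) {..<m h}"
proof (rule inj_onI)
  fix i j
  assume "i \<in> {..<m h}" "j \<in> {..<m h}" "c (h, i) = c (h, j)"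
  with assms show "i = j"
    unfolding proper_coloring_def rep_E_def by (metis fst_conv rep_V_iff snd_conv lessThan_iff)
qed

lemma good_replication_card:
  assumes "finite V"
  shows "good_replication V E (\<lambda>_. card V)"
  unfolding good_replication_def
proof (intro conjI ballI allI impI)
  show "1 \<le> card V" if "h \<in> V" for h
    using that assms by (auto simp: Suc_le_eq card_gt_0_iff)
next
  fix c
  assume c: "proper_coloring (rep_V V (\<lambda>_. card V)) (rep_E E) c"
  define A where "A h = (\<lambda>i. c (h, i)) ` {..<card V}" for h
  have "card (A h) = card V" if "h \<in> V" for h
    using card_image[OF proper_coloring_inj_on_clique[OF c that]] by (simp add: A_def)
  then obtain g where g: "\<forall>h\<in>V. g h \<in> A h" "inj_on g V"
    using exists_inj_on_choice[OF assms, of A] by auto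
  then obtain f where f: "\<forall>h\<in>V. f h < card V \<and> c (h, f h) = g h"
    using bchoice[of V "\<lambda>h i. i < card V \<and> c (h, i) = g h"] by (force simp: A_def)
  have "inj_on (\<lambda>h. c (h, f h)) V"
    using inj_on_cong[of V "\<lambda>h. c (h, f h)" g] f g(2) by simp
  with f show "\<exists>f. (\<forall>h\<in>V. f h < card V) \<and> inj_on (\<lambda>h. c (h, f h)) V"
    by blast
qed

lemma rep_E_irrefl: "\<not> rep_E E u u"
  by (simp add: rep_E_def)

text \<open>Colours of the embedded part are made even and all other vertices receive distinct odd
  colours, so the extension stays proper.\<close>

lemma good_replication_embedding:
  assumes "finite V" and "inj_on g U" and "g ` U \<subseteq> V" and good: "good_replication V E m"
  shows "good_replication U (\<lambda>x y. E (g x) (g y)) (m \<circ> g)"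
  unfolding good_replication_def
proof (intro conjI ballI allI impI)
  show "1 \<le> (m \<circ> g) x" if "x \<in> U" for x
    using good that \<open>g ` U \<subseteq> V\<close> by (auto simp: good_replication_def)
next
  fix c
  assume c: "proper_coloring (rep_V U (m \<circ> g)) (rep_E (\<lambda>x y. E (g x) (g y))) c"
  obtain k :: "_ \<Rightarrow> nat" where k: "inj_on k (rep_V V m)"
    using finite_imp_inj_to_nat_seg[OF finite_rep_V[OF \<open>finite V\<close>]] by blast
  define d where
    "d = (\<lambda>(v, i). if v \<in> g ` U then 2 * c (inv_into U g v, i) else 2 * k (v, i) + 1)"
  have d_image: "d (g x, i) = 2 * c (x, i)" if "x \<in> U" for x i
    using that \<open>inj_on g U\<close> by (simp add: d_def)
  have "d (v, i) \<noteq> d (w, j)"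
    if vw: "(v, i) \<in> rep_V V m" "(w, j) \<in> rep_V V m" and e: "rep_E E (v, i) (w, j)" for v i w j
  proof (cases "v \<in> g ` U \<and> w \<in> g ` U")
    case True
    then obtain x y where xy: "x \<in> U" "y \<in> U" "v = g x" "w = g y" by blast
    then have "rep_E (\<lambda>x y. E (g x) (g y)) (x, i) (y, j)"
      using e inj_onD[OF \<open>inj_on g U\<close>] by (auto simp: rep_E_def)
    moreover have "(x, i) \<in> rep_V U (m \<circ> g)" "(y, j) \<in> rep_V U (m \<circ> g)"
      using vw xy by auto
    ultimately have "c (x, i) \<noteq> c (y, j)"
      using c unfolding proper_coloring_def by blast
    then show ?thesis using xy d_image by simp
  next
    case False
    have "(v, i) \<noteq> (w, j)" using e rep_E_irrefl by blast
    then have "k (v, i) \<noteq> k (w, j)" using inj_onD[OF k] vw by blast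
    with False show ?thesis by (auto simp: d_def) presburger+
  qed
  then have "proper_coloring (rep_V V m) (rep_E E) d"
    unfolding proper_coloring_def by fast
  then obtain f where f: "\<forall>v\<in>V. f v < m v" "inj_on (\<lambda>v. d (v, f v)) V"
    using good unfolding good_replication_def by blast
  have "inj_on (\<lambda>x. c (x, f (g x))) U"
  proof (rule inj_onI)
    fix x y
    assume "x \<in> U" "y \<in> U" "c (x, f (g x)) = c (y, f (g y))"
    then have "g x = g y"
      using inj_onD[OF f(2)] d_image \<open>g ` U \<subseteq> V\<close> by (metis image_subset_iff)
    then show "x = y" using inj_onD[OF \<open>inj_on g U\<close>] \<open>x \<in> U\<close> \<open>y \<in> U\<close> by blast
  qed
  moreover have "\<forall>x\<in>U. f (g x) < (m \<circ> g) x" using f(1) \<open>g ` U \<subseteq> V\<close> by auto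
  ultimately show "\<exists>f. (\<forall>x\<in>U. f x < (m \<circ> g) x) \<and> inj_on (\<lambda>x. c (x, f x)) U"
    by (intro exI[of _ "f \<circ> g"]) simp
qed

lemma proper_coloring_rep_embedding:
  assumes c: "proper_coloring (rep_V V m) (rep_E E) c" and "inj_on g U" and "g ` U \<subseteq> V"
  shows "proper_coloring (rep_V U (m \<circ> g)) (rep_E (\<lambda>x y. E (g x) (g y))) (\<lambda>(x, i). c (g x, i))"
  unfolding proper_coloring_def
proof (clarify)
  fix x i y j
  assume xy: "(x, i) \<in> rep_V U (m \<circ> g)" "(y, j) \<in> rep_V U (m \<circ> g)"
    and e: "rep_E (\<lambda>x y. E (g x) (g y)) (x, i) (y, j)" and eq: "c (g x, i) = c (g y, j)"
  have "rep_E E (g x, i) (g y, j)"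
    using e xy inj_onD[OF \<open>inj_on g U\<close>] by (auto simp: rep_E_def)
  moreover have "(g x, i) \<in> rep_V V m" "(g y, j) \<in> rep_V V m"
    using xy \<open>g ` U \<subseteq> V\<close> by auto
  ultimately show False using c eq unfolding proper_coloring_def by blast
qed

lemma good_replication_join_Inl:
  assumes "finite V1" and "finite V2" and "good_replication (join_V V1 V2) (join_E E1 E2) m"
  shows "good_replication V1 E1 (m \<circ> Inl)"
proof -
  have "good_replication V1 (\<lambda>x y. join_E E1 E2 (Inl x) (Inl y)) (m \<circ> Inl)"
    by (rule good_replication_embedding[OF _ _ _ assms(3)]) (auto simp: assms join_V_eq_Plus)
  moreover have "(\<lambda>x y. join_E E1 E2 (Inl x) (Inl y)) = E1" by (intro ext) simp
  ultimately show ?thesis by simp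
qed

lemma good_replication_join_Inr:
  assumes "finite V1" and "finite V2" and "good_replication (join_V V1 V2) (join_E E1 E2) m"
  shows "good_replication V2 E2 (m \<circ> Inr)"
proof -
  have "good_replication V2 (\<lambda>x y. join_E E1 E2 (Inr x) (Inr y)) (m \<circ> Inr)"
    by (rule good_replication_embedding[OF _ _ _ assms(3)]) (auto simp: assms join_V_eq_Plus)
  moreover have "(\<lambda>x y. join_E E1 E2 (Inr x) (Inr y)) = E2" by (intro ext) simp
  ultimately show ?thesis by simp
qed

lemma good_replication_join:
  assumes good1: "good_replication V1 E1 m1" and good2: "good_replication V2 E2 m2"
  shows "good_replication (join_V V1 V2) (join_E E1 E2) (case_sum m1 m2)"
  unfolding good_replication_def
proof (intro conjI allI impI)
  show "\<forall>h\<in>join_V V1 V2. 1 \<le> case_sum m1 m2 h"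
    using good1 good2 by (auto simp: good_replication_def join_V_eq_Plus)
next
  fix c
  assume c: "proper_coloring (rep_V (join_V V1 V2) (case_sum m1 m2)) (rep_E (join_E E1 E2)) c"
  have c1: "proper_coloring (rep_V V1 m1) (rep_E E1) (\<lambda>(x, i). c (Inl x, i))"
    and c2: "proper_coloring (rep_V V2 m2) (rep_E E2) (\<lambda>(x, i). c (Inr x, i))"
    using proper_coloring_rep_embedding[OF c, of Inl V1] proper_coloring_rep_embedding[OF c, of Inr V2]
    by (auto simp: join_V_eq_Plus case_sum_o_inj)
  obtain f1 where f1: "\<forall>h\<in>V1. f1 h < m1 h" "inj_on (\<lambda>h. c (Inl h, f1 h)) V1"
    using good1 c1 unfolding good_replication_def by fastforce
  obtain f2 where f2: "\<forall>h\<in>V2. f2 h < m2 h" "inj_on (\<lambda>h. c (Inr h, f2 h)) V2"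
    using good2 c2 unfolding good_replication_def by fastforce
  have cross: "c (Inl x, f1 x) \<noteq> c (Inr y, f2 y)" if "x \<in> V1" "y \<in> V2" for x y
  proof -
    have "(Inl x, f1 x) \<in> rep_V (join_V V1 V2) (case_sum m1 m2)"
      and "(Inr y, f2 y) \<in> rep_V (join_V V1 V2) (case_sum m1 m2)"
      using that f1(1) f2(1) by (auto simp: join_V_eq_Plus)
    moreover have "rep_E (join_E E1 E2) (Inl x, f1 x) (Inr y, f2 y)"
      by (simp add: rep_E_def)
    ultimately show ?thesis using c unfolding proper_coloring_def by blast
  qed
  have "inj_on (\<lambda>h. c (h, case_sum f1 f2 h)) (V1 <+> V2)"
    using f1(2) f2(2) cross by (fastforce simp: inj_on_def)
  moreover have "\<forall>h\<in>V1 <+> V2. case_sum f1 f2 h < case_sum m1 m2 h"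
    using f1(1) f2(1) by auto
  ultimately show "\<exists>f. (\<forall>h\<in>join_V V1 V2. f h < case_sum m1 m2 h) \<and>
      inj_on (\<lambda>h. c (h, f h)) (join_V V1 V2)"
    unfolding join_V_eq_Plus by blast
qed

lemma rho_R_le: "good_replication V E m \<Longrightarrow> rho_R V E \<le> sum m V"
  unfolding rho_R_def by (rule Least_le) blast

lemma rho_R_attained:
  assumes "finite V"
  obtains m where "good_replication V E m" and "rho_R V E = sum m V"
proof -
  have "\<exists>m. good_replication V E m \<and> rho_R V E = sum m V"
    unfolding rho_R_def
    by (rule LeastI[of _ "sum (\<lambda>_. card V) V"]) (use good_replication_card[OF assms] in blast)
  then show ?thesis using that by blast
qed

theorem corollary5p1:
  fixes V1 :: "'a set" and E1 :: "'a \<Rightarrow> 'a \<Rightarrow> bool"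
    and V2 :: "'b set" and E2 :: "'b \<Rightarrow> 'b \<Rightarrow> bool"
  assumes "simple_graph V1 E1" and "simple_graph V2 E2"
  shows "rho_R (join_V V1 V2) (join_E E1 E2) = rho_R V1 E1 + rho_R V2 E2"
proof (rule antisym)
  have fin1: "finite V1" and fin2: "finite V2"
    using assms by (auto simp: simple_graph_def)
  then have fin: "finite (join_V V1 V2)" by (simp add: join_V_eq_Plus)
  obtain m1 where m1: "good_replication V1 E1 m1" "rho_R V1 E1 = sum m1 V1"
    using rho_R_attained[OF fin1] .
  obtain m2 where m2: "good_replication V2 E2 m2" "rho_R V2 E2 = sum m2 V2"
    using rho_R_attained[OF fin2] .
  show "rho_R (join_V V1 V2) (join_E E1 E2) \<le> rho_R V1 E1 + rho_R V2 E2"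
    using rho_R_le[OF good_replication_join[OF m1(1) m2(1)]] m1(2) m2(2)
    by (simp add: join_V_eq_Plus sum.Plus[OF fin1 fin2])
  obtain m where m: "good_replication (join_V V1 V2) (join_E E1 E2) m"
    "rho_R (join_V V1 V2) (join_E E1 E2) = sum m (join_V V1 V2)"
    using rho_R_attained[OF fin] .
  show "rho_R V1 E1 + rho_R V2 E2 \<le> rho_R (join_V V1 V2) (join_E E1 E2)"
    using rho_R_le[OF good_replication_join_Inl[OF fin1 fin2 m(1)]]
      rho_R_le[OF good_replication_join_Inr[OF fin1 fin2 m(1)]] m(2)
    by (simp add: join_V_eq_Plus sum.Plus[OF fin1 fin2])
qed

end
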